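(* Let $h_{1},h_{2},f:\mathbb{C}\to\mathbb{C}$ be any functions, and let $a,b:\mathbb{C}\to\mathbb{C}$ be functions such that for all $x$ \[ b(x)=-h_{1}(x)h_{2}(x),\qquad f(x)a(x)=f(x-1)h_{1}(x)+f(x+1)h_{2}(x+1). \] Then the sequence $F_{n}=f(n)\cdot\prod_{k=1}^{n}h_{2}(k)$ solves the recurrence \[ F_{n-1}b(n)+F_{n}a(n)=F_{n+1}, \] and for every $n\ge 1$, \[ \mathbb{K}_{1}^{n}\frac{b(i)}{a(i)}=\frac{f(1)h_{2}(1)}{f(0)}\left(\frac{1}{\sum_{k=0}^{n}\frac{f(0)f(1)}{f(k)f(k+1)}\prod_{i=1}^{k}\left(\frac{h_{1}(i)}{h_{2}(i+1)}\right)}-1\right). \]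
   Context: For sequences $b_i,a_i$ of complex numbers, the finite continued fraction is \[ \mathbb{K}_{1}^{n}\frac{b_{i}}{a_{i}}:=\cfrac{b_{1}}{a_{1}+\cfrac{b_{2}}{a_{2}+\cfrac{b_{3}}{\ddots+\cfrac{b_{n}}{a_{n}+0}}}}\in\mathbb{C}\cup\{\infty\}, \] equivalently the image of $0$ under the composition of Möbius maps $z\mapsto \frac{b_1}{a_1+z}\circ\cdots\circ z\mapsto\frac{b_n}{a_n+z}$; here $\mathbb{K}_{1}^{n}\frac{b(i)}{a(i)}$ means $b_i=b(i)$, $a_i=a(i)$. *)

theory Defs
  imports Complex_Main
begin

text \<open>Extended complex plane \<open>\<complex> \<union> {\<infinity>}\<close> is modelled as \<open>complex option\<close>,
  with \<open>None\<close> standing for \<open>\<infinity>\<close>.\<close>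

text \<open>The Moebius map \<open>z \<mapsto> b/(a+z)\<close> acting on homogeneous coordinates
  \<open>z = p/q\<close>: \<open>(p,q) \<mapsto> (b q, a q + p)\<close>.\<close>
definition mob_hom :: "complex \<Rightarrow> complex \<Rightarrow> complex \<times> complex \<Rightarrow> complex \<times> complex" where
  "mob_hom b a pq = (b * snd pq, a * snd pq + fst pq)"

text \<open>Finite continued fraction \<open>K_1^n b_i/a_i\<close>: the image of \<open>0 = (0:1)\<close> under
  \<open>(z\<mapsto>b_1/(a_1+z)) \<circ> \<dots> \<circ> (z\<mapsto>b_n/(a_n+z))\<close>, returned in \<open>\<complex> \<union> {\<infinity>}\<close>.\<close>
definition cont_frac :: "(nat \<Rightarrow> complex) \<Rightarrow> (nat \<Rightarrow> complex) \<Rightarrow> nat \<Rightarrow> complex option" where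
  "cont_frac b a n =
     (let pq = foldr (\<lambda>i. mob_hom (b i) (a i)) [1..<n+1] (0, 1)
      in if snd pq = 0 then None else Some (fst pq / snd pq))"

end

theory Submission
  imports Defs
begin

text \<open>The convergent \<open>K_1^n b_i/a_i\<close> is \<open>A_n/B_n\<close>, where \<open>A\<close> and \<open>B\<close> solve
  \<open>X_n = a_n X_(n-1) + b_n X_(n-2)\<close> with \<open>A_(-1) = 1, A_0 = 0\<close> and \<open>B_(-1) = 0, B_0 = 1\<close>.
  The hypotheses on \<open>a\<close> and \<open>b\<close> say exactly that \<open>F\<close> solves this recurrence. By reduction
  of order every solution is then \<open>F_n (c \<Sum>_(k<n) s_k + d)\<close>, where \<open>s_k\<close> is, up to a constant, the
  Casoratian \<open>W_k\<close> divided by \<open>F_k F_(k+1)\<close>; since \<open>W_(k+1) = -b_(k+1) W_k = h1(k+1) h2(k+1) W_k\<close>, this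
  is the product in the statement. Matching \<open>c, d\<close> to the initial values of \<open>A\<close> and \<open>B\<close> and
  taking the quotient gives the formula.\<close>

text \<open>Indices are shifted by one: \<open>lin_rec2 b a u0 u1 (n + 1)\<close> is \<open>X_n\<close> for the solution with
  \<open>X_(-1) = u0\<close> and \<open>X_0 = u1\<close>.\<close>
fun lin_rec2 :: "(nat \<Rightarrow> 'a::comm_semiring_1) \<Rightarrow> (nat \<Rightarrow> 'a) \<Rightarrow> 'a \<Rightarrow> 'a \<Rightarrow> nat \<Rightarrow> 'a" where
  "lin_rec2 b a u0 u1 0 = u0"
| "lin_rec2 b a u0 u1 (Suc 0) = u1"
| "lin_rec2 b a u0 u1 (Suc (Suc n)) =
     b (Suc n) * lin_rec2 b a u0 u1 n + a (Suc n) * lin_rec2 b a u0 u1 (Suc n)"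

lemma lin_rec2_unique:
  fixes Y :: "nat \<Rightarrow> 'a::comm_semiring_1"
  assumes rec: "\<And>m. m + 2 \<le> L \<Longrightarrow> Y (m + 2) = b (m + 1) * Y m + a (m + 1) * Y (m + 1)"
    and "m \<le> L"
  shows "Y m = lin_rec2 b a (Y 0) (Y 1) m"
  using \<open>m \<le> L\<close>
proof (induction m rule: less_induct)
  case (less m)
  consider "m = 0" | "m = 1" | j where "m = j + 2"
    by (metis One_nat_def add_2_eq_Suc' not0_implies_Suc)
  then show ?case
  proof cases
    case 3
    then have "Y m = b (j + 1) * Y j + a (j + 1) * Y (j + 1)"
      using rec less.prems by simp
    also have "\<dots> = lin_rec2 b a (Y 0) (Y 1) m"
      using less.IH[of j] less.IH[of "j + 1"] less.prems 3 by (simp add: numeral_2_eq_2)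
    finally show ?thesis .
  qed simp_all
qed

lemma foldr_mob_hom_eq_lin_rec2:
  "foldr (\<lambda>i. mob_hom (b i) (a i)) [1..<n+1] (p, q) =
     (p * lin_rec2 b a 1 0 n + q * lin_rec2 b a 1 0 (Suc n),
      p * lin_rec2 b a 0 1 n + q * lin_rec2 b a 0 1 (Suc n))"
proof (induction n arbitrary: p q)
  case (Suc n)
  have "foldr (\<lambda>i. mob_hom (b i) (a i)) [1..<Suc n + 1] (p, q)
      = foldr (\<lambda>i. mob_hom (b i) (a i)) [1..<n + 1] (b (Suc n) * q, a (Suc n) * q + p)"
    by (simp add: mob_hom_def)
  then show ?case
    unfolding Suc.IH by (simp add: algebra_simps)
qed simp

lemma cont_frac_eq_lin_rec2:
  "cont_frac b a n =
     (if lin_rec2 b a 0 1 (n + 1) = 0 then None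
      else Some (lin_rec2 b a 1 0 (n + 1) / lin_rec2 b a 0 1 (n + 1)))"
  using foldr_mob_hom_eq_lin_rec2[of b a n 0 1] by (simp add: cont_frac_def)

lemma lin_rec2_reduction_of_order:
  fixes F s :: "nat \<Rightarrow> 'a::comm_ring_1"
  assumes F: "\<And>m. m + 2 \<le> L \<Longrightarrow> F (m + 2) = b (m + 1) * F m + a (m + 1) * F (m + 1)"
    and s: "\<And>m. m + 2 \<le> L \<Longrightarrow> s (m + 1) * F (m + 2) = - b (m + 1) * F m * s m"
    and "m \<le> L"
  shows "lin_rec2 b a (F 0 * d) (F 1 * (c * s 0 + d)) m = F m * (c * sum s {..<m} + d)"
proof -
  define Y where "Y m = F m * (c * sum s {..<m} + d)" for m
  have "Y (m + 2) = b (m + 1) * Y m + a (m + 1) * Y (m + 1)" if "m + 2 \<le> L" for m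
  proof -
    have "Y (m + 2) = F (m + 2) * (c * sum s {..<m} + d) + c * s m * F (m + 2) + c * s (m + 1) * F (m + 2)"
      by (simp add: Y_def numeral_2_eq_2 algebra_simps)
    also have "\<dots> = F (m + 2) * (c * sum s {..<m} + d) + c * s m * (F (m + 2) - b (m + 1) * F m)"
      using s[OF that] by (simp add: algebra_simps)
    also have "\<dots> = b (m + 1) * Y m + a (m + 1) * Y (m + 1)"
      using F[OF that] by (simp add: Y_def algebra_simps)
    finally show ?thesis .
  qed
  then have "Y m = lin_rec2 b a (Y 0) (Y 1) m"
    using lin_rec2_unique \<open>m \<le> L\<close> by blast
  then show ?thesis
    by (simp add: Y_def)
qed

definition rescaled_f :: "('a::comm_ring_1 \<Rightarrow> 'a) \<Rightarrow> ('a \<Rightarrow> 'a) \<Rightarrow> nat \<Rightarrow> 'a" where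
  "rescaled_f f h2 n = f (of_nat n) * (\<Prod>k=1..n. h2 (of_nat k))"

definition reduction_weight :: "('a::field \<Rightarrow> 'a) \<Rightarrow> ('a \<Rightarrow> 'a) \<Rightarrow> ('a \<Rightarrow> 'a) \<Rightarrow> nat \<Rightarrow> 'a" where
  "reduction_weight f h1 h2 k = f 0 * f 1 / (f (of_nat k) * f (of_nat k + 1))
     * (\<Prod>i=1..k. h1 (of_nat i) / h2 (of_nat i + 1))"

lemma rescaled_f_Suc:
  "rescaled_f f h2 (m + 1) = f (of_nat (m + 1)) * h2 (of_nat (m + 1)) * (\<Prod>k=1..m. h2 (of_nat k))"
  by (simp add: rescaled_f_def prod.nat_ivl_Suc')

lemma rescaled_f_Suc_Suc:
  "rescaled_f f h2 (m + 2) =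
     f (of_nat (m + 2)) * h2 (of_nat (m + 2)) * (h2 (of_nat (m + 1)) * (\<Prod>k=1..m. h2 (of_nat k)))"
  by (simp add: rescaled_f_def prod.nat_ivl_Suc' numeral_2_eq_2)

lemma rescaled_f_rec:
  fixes f h1 h2 a b :: "'a::comm_ring_1 \<Rightarrow> 'a"
  assumes hb: "\<And>x. b x = - h1 x * h2 x"
      and ha: "\<And>x. f x * a x = f (x - 1) * h1 x + f (x + 1) * h2 (x + 1)"
  shows "rescaled_f f h2 (m + 2) =
           b (of_nat (m + 1)) * rescaled_f f h2 m + a (of_nat (m + 1)) * rescaled_f f h2 (m + 1)"
proof -
  let ?x = "of_nat (m + 1) :: 'a" and ?y = "of_nat (m + 2) :: 'a"
    and ?P = "\<Prod>k=1..m. h2 (of_nat k)"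
  have F0: "rescaled_f f h2 m = f (of_nat m) * ?P"
    by (simp add: rescaled_f_def)
  have "f ?x * a ?x = f (of_nat m) * h1 ?x + f ?y * h2 ?y"
    using ha[of ?x] by (simp add: add.assoc numeral_2_eq_2)
  then have "h2 ?x * ?P * (f ?x * a ?x - f (of_nat m) * h1 ?x) = f ?y * h2 ?y * (h2 ?x * ?P)"
    by (simp add: algebra_simps)
  then show ?thesis
    unfolding F0 rescaled_f_Suc rescaled_f_Suc_Suc hb by (simp add: algebra_simps)
qed

lemma reduction_weight_rec:
  fixes f h1 h2 :: "'a::field \<Rightarrow> 'a"
  assumes "f (of_nat m) \<noteq> 0" "f (of_nat (m + 2)) \<noteq> 0" "h2 (of_nat (m + 2)) \<noteq> 0"
  shows "reduction_weight f h1 h2 (m + 1) * rescaled_f f h2 (m + 2) =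
           h1 (of_nat (m + 1)) * h2 (of_nat (m + 1)) * rescaled_f f h2 m * reduction_weight f h1 h2 m"
proof -
  let ?x = "of_nat (m + 1) :: 'a" and ?y = "of_nat (m + 2) :: 'a"
    and ?P = "\<Prod>k=1..m. h2 (of_nat k)" and ?Q = "\<Prod>i=1..m. h1 (of_nat i) / h2 (of_nat i + 1)"
  have s0: "reduction_weight f h1 h2 m = f 0 * f 1 / (f (of_nat m) * f ?x) * ?Q"
    by (simp add: reduction_weight_def add.commute)
  have s1: "reduction_weight f h1 h2 (m + 1) = f 0 * f 1 / (f ?x * f ?y) * (h1 ?x / h2 ?y * ?Q)"
    by (simp add: reduction_weight_def prod.nat_ivl_Suc' add_ac numeral_2_eq_2)
  have F0: "rescaled_f f h2 m = f (of_nat m) * ?P"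
    by (simp add: rescaled_f_def)
  show ?thesis
    unfolding s0 s1 F0 rescaled_f_Suc_Suc using assms by (simp add: field_simps)
qed

lemma lin_rec2_rescaled_f:
  fixes f h1 h2 a b :: "'a::field \<Rightarrow> 'a"
  assumes hb: "\<And>x. b x = - h1 x * h2 x"
      and ha: "\<And>x. f x * a x = f (x - 1) * h1 x + f (x + 1) * h2 (x + 1)"
      and f_nz: "\<And>k. k \<le> n + 1 \<Longrightarrow> f (of_nat k) \<noteq> 0"
      and h2_nz: "\<And>k. 1 \<le> k \<Longrightarrow> k \<le> n + 1 \<Longrightarrow> h2 (of_nat k) \<noteq> 0"
      and "m \<le> n + 1"
  shows "lin_rec2 (\<lambda>i. b (of_nat i)) (\<lambda>i. a (of_nat i)) (f 0 * d) (f 1 * h2 1 * (c + d)) m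
           = rescaled_f f h2 m * (c * sum (reduction_weight f h1 h2) {..<m} + d)"
proof -
  have "f 0 \<noteq> 0" "f 1 \<noteq> 0"
    using f_nz[of 0] f_nz[of 1] by simp_all
  then have "reduction_weight f h1 h2 0 = 1"
    by (simp add: reduction_weight_def)
  moreover have "rescaled_f f h2 0 = f 0" "rescaled_f f h2 1 = f 1 * h2 1"
    by (simp_all add: rescaled_f_def)
  moreover have "reduction_weight f h1 h2 (m + 1) * rescaled_f f h2 (m + 2) =
      - b (of_nat (m + 1)) * rescaled_f f h2 m * reduction_weight f h1 h2 m" if "m + 2 \<le> n + 1" for m
    using reduction_weight_rec[of f m h2 h1] f_nz[of m] f_nz[of "m + 2"] h2_nz[of "m + 2"] that
    by (simp add: hb)
  ultimately show ?thesis
    using lin_rec2_reduction_of_order[of "n + 1" "rescaled_f f h2" "\<lambda>i. b (of_nat i)" "\<lambda>i. a (of_nat i)"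
        "reduction_weight f h1 h2" m d c] rescaled_f_rec[OF hb ha] \<open>m \<le> n + 1\<close>
    by simp
qed

lemma cont_frac_rescaled_f:
  fixes f h1 h2 a b :: "complex \<Rightarrow> complex"
  assumes hb: "\<And>x. b x = - h1 x * h2 x"
      and ha: "\<And>x. f x * a x = f (x - 1) * h1 x + f (x + 1) * h2 (x + 1)"
      and f_nz: "\<And>k. k \<le> n + 1 \<Longrightarrow> f (of_nat k) \<noteq> 0"
      and h2_nz: "\<And>k. 1 \<le> k \<Longrightarrow> k \<le> n + 1 \<Longrightarrow> h2 (of_nat k) \<noteq> 0"
  defines "S \<equiv> \<Sum>k=0..n. reduction_weight f h1 h2 k"
  shows "cont_frac (\<lambda>i. b (of_nat i)) (\<lambda>i. a (of_nat i)) n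
           = (if S = 0 then None else Some (f 1 * h2 1 / f 0 * (1 / S - 1)))"
proof -
  let ?b = "\<lambda>i. b (of_nat i)" and ?a = "\<lambda>i. a (of_nat i)" and ?F = "rescaled_f f h2 (n + 1)"
  have S: "sum (reduction_weight f h1 h2) {..<n + 1} = S"
    by (simp add: S_def atLeast0AtMost lessThan_Suc_atMost)
  have F_nz: "?F \<noteq> 0"
    using f_nz[of "n + 1"] h2_nz by (simp add: rescaled_f_def prod_zero_iff del: of_nat_Suc)
  have nz: "f 0 \<noteq> 0" "f 1 * h2 1 \<noteq> 0"
    using f_nz[of 0] f_nz[of 1] h2_nz[of 1] by simp_all
  have closed_form: "lin_rec2 ?b ?a (f 0 * d) (f 1 * h2 1 * (c + d)) (n + 1) = ?F * (c * S + d)"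
    for c d using lin_rec2_rescaled_f[OF hb ha f_nz h2_nz order.refl] S by simp
  have denom: "lin_rec2 ?b ?a 0 1 (n + 1) = ?F * S / (f 1 * h2 1)"
    using closed_form[of 0 "1 / (f 1 * h2 1)"] nz by simp
  have numer: "lin_rec2 ?b ?a 1 0 (n + 1) = ?F * (1 - S) / f 0"
    using closed_form[of "1 / f 0" "- 1 / f 0"] nz by (simp add: field_simps)
  show ?thesis
    unfolding cont_frac_eq_lin_rec2 numer denom using F_nz nz by (simp add: field_simps)
qed

theorem theorem1:
  fixes h1 h2 f a b :: "complex \<Rightarrow> complex"
  assumes hb: "\<And>x. b x = - h1 x * h2 x"
      and ha: "\<And>x. f x * a x = f (x - 1) * h1 x + f (x + 1) * h2 (x + 1)"
  defines "F \<equiv> (\<lambda>n::nat. f (of_nat n) * (\<Prod>k=1..n. h2 (of_nat k)))"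
  shows "(\<forall>n::nat. n \<ge> 1 \<longrightarrow>
            F (n - 1) * b (of_nat n) + F n * a (of_nat n) = F (n + 1))
       \<and> (\<forall>n::nat. n \<ge> 1
            \<longrightarrow> (\<forall>k\<in>{0..n+1}. f (of_nat k) \<noteq> 0)
            \<longrightarrow> (\<forall>k\<in>{1..n+1}. h2 (of_nat k) \<noteq> 0)
            \<longrightarrow> (let S = (\<Sum>k=0..n. f 0 * f 1 / (f (of_nat k) * f (of_nat k + 1))
                              * (\<Prod>i=1..k. h1 (of_nat i) / h2 (of_nat i + 1)))
                in cont_frac (\<lambda>i. b (of_nat i)) (\<lambda>i. a (of_nat i)) n
                   = (if S = 0 then None
                      else Some (f 1 * h2 1 / f 0 * (1 / S - 1)))))"
proof -
  have F: "F = rescaled_f f h2"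
    unfolding F_def rescaled_f_def ..
  have "F (n - 1) * b (of_nat n) + F n * a (of_nat n) = F (n + 1)" if "n \<ge> 1" for n
  proof -
    obtain m where "n = m + 1"
      using \<open>n \<ge> 1\<close> by (metis add.commute le_Suc_ex)
    then show ?thesis
      using rescaled_f_rec[OF hb ha, of m] by (simp add: F algebra_simps)
  qed
  moreover have "cont_frac (\<lambda>i. b (of_nat i)) (\<lambda>i. a (of_nat i)) n
      = (if S = 0 then None else Some (f 1 * h2 1 / f 0 * (1 / S - 1)))"
    if "\<forall>k\<in>{0..n+1}. f (of_nat k) \<noteq> 0" "\<forall>k\<in>{1..n+1}. h2 (of_nat k) \<noteq> 0"
      and "S = (\<Sum>k=0..n. reduction_weight f h1 h2 k)" for n S
    using cont_frac_rescaled_f[OF hb ha, of n] that by simp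
  ultimately show ?thesis
    by (simp add: Let_def reduction_weight_def)
qed

end
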